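(* Fix $b\in\mathbb{N}$. Any $b$-pattern $P$ consisting of crosses and exactly one circle is realizable in $L=\mathbb{N}\times\mathbb{N}$. Consequently, the graph $G_b$ is not connected.
   Context: For $r,s\in\mathbb{N}$, $\gcd_b(r,s)=\max\{k\in\mathbb{N} : k\mid r \text{ and } k^b\mid s\}$; a point $(r,s)\in L$ is $b$-visible if $\gcd_b(r,s)=1$ and $b$-invisible otherwise. A $b$-pattern $P$ is obtained by choosing a positive integer $w$ and assigning to each $(r,s)\in L$ with $1\le r\le w$, $1\le s\le w^b$ either a cross, a circle, or neither. $P$ is realizable in $L$ if there is $(u,v)\in L$ such that $(u+r,v+s)$ is $b$-visible for every circle $(r,s)$ of $P$ and $b$-invisible for every cross $(r,s)$ of $P$. The graph $G_b$ has as vertices the $b$-visible points of $L$, with an edge between two such points whenever their Euclidean distance is $1$. *)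

theory Defs
  imports Complex_Main
begin

text \<open>Here \<open>\<nat>\<close> denotes the positive integers, so L = {(r,s). r \<ge> 1 \<and> s \<ge> 1}.\<close>

definition inL :: "nat \<times> nat \<Rightarrow> bool" where
  "inL p \<longleftrightarrow> fst p \<ge> 1 \<and> snd p \<ge> 1"

definition gcd_b :: "nat \<Rightarrow> nat \<Rightarrow> nat \<Rightarrow> nat" where
  "gcd_b b r s = Max {k. k \<ge> 1 \<and> k dvd r \<and> k ^ b dvd s}"

definition b_visible :: "nat \<Rightarrow> nat \<times> nat \<Rightarrow> bool" where
  "b_visible b p \<longleftrightarrow> inL p \<and> gcd_b b (fst p) (snd p) = 1"

definition b_invisible :: "nat \<Rightarrow> nat \<times> nat \<Rightarrow> bool" where
  "b_invisible b p \<longleftrightarrow> inL p \<and> gcd_b b (fst p) (snd p) \<noteq> 1"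

definition b_pattern :: "nat \<Rightarrow> nat \<Rightarrow> (nat \<times> nat) set \<Rightarrow> (nat \<times> nat) set \<Rightarrow> bool" where
  "b_pattern b w circles crosses \<longleftrightarrow> w \<ge> 1 \<and> circles \<inter> crosses = {} \<and>
     (\<forall>(r,s) \<in> circles \<union> crosses. 1 \<le> r \<and> r \<le> w \<and> 1 \<le> s \<and> s \<le> w ^ b)"

definition realizable :: "nat \<Rightarrow> (nat \<times> nat) set \<Rightarrow> (nat \<times> nat) set \<Rightarrow> bool" where
  "realizable b circles crosses \<longleftrightarrow> (\<exists>u v. inL (u, v) \<and>
     (\<forall>(r,s) \<in> circles. b_visible b (u + r, v + s)) \<and>
     (\<forall>(r,s) \<in> crosses. b_invisible b (u + r, v + s)))"

definition edist :: "nat \<times> nat \<Rightarrow> nat \<times> nat \<Rightarrow> real" where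
  "edist p q = sqrt ((real (fst p) - real (fst q))\<^sup>2 + (real (snd p) - real (snd q))\<^sup>2)"

definition G_adj :: "nat \<Rightarrow> nat \<times> nat \<Rightarrow> nat \<times> nat \<Rightarrow> bool" where
  "G_adj b p q \<longleftrightarrow> b_visible b p \<and> b_visible b q \<and> edist p q = 1"

definition G_connected :: "nat \<Rightarrow> bool" where
  "G_connected b \<longleftrightarrow> (\<forall>p q. b_visible b p \<and> b_visible b q \<longrightarrow> (G_adj b)\<^sup>*\<^sup>* p q)"

end

(* Give every cross (r, s) its own prime p larger than the width w of the pattern.  The Chinese
   remainder theorem yields u with p dvd u + r and v with p^b dvd v + s, which makes every cross
   b-invisible.  The circle (r0, s0) cannot share such a prime with a cross: all coordinates of the
   window are smaller than p and p^b, so the congruences would force (r, s) = (r0, s0).  Every other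
   prime q dividing u + r0 is handled by adding v + s0 = 1 (mod q) to the system for v.
   Realizing the circle (2, 2) surrounded by four crosses produces an isolated vertex of G_b,
   distinct from the b-visible point (1, 1). *)
theory Submission
  imports Defs "HOL-Number_Theory.Cong" "HOL-Library.Countable"
begin

lemma finite_gcd_b_candidates:
  "(r :: nat) \<ge> 1 \<Longrightarrow> finite {k. k \<ge> 1 \<and> k dvd r \<and> k ^ b dvd s}"
  by (rule finite_subset[of _ "{..r}"]) (auto intro!: dvd_imp_le)

lemma gcd_b_eq_1_iff:
  assumes "r \<ge> 1"
  shows "gcd_b b r s = 1 \<longleftrightarrow> (\<forall>p. prime p \<longrightarrow> p dvd r \<longrightarrow> \<not> p ^ b dvd s)"
proof
  assume gcd1: "gcd_b b r s = 1"
  show "\<forall>p. prime p \<longrightarrow> p dvd r \<longrightarrow> \<not> p ^ b dvd s"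
  proof (intro allI impI notI)
    fix p :: nat assume "prime p" "p dvd r" "p ^ b dvd s"
    then have "p \<le> gcd_b b r s"
      unfolding gcd_b_def using finite_gcd_b_candidates[OF assms]
      by (intro Max_ge) (auto simp: prime_gt_0_nat Suc_le_eq)
    moreover have "p > 1" using \<open>prime p\<close> by (rule prime_gt_1_nat)
    ultimately show False using gcd1 by simp
  qed
next
  assume no_prime: "\<forall>p. prime p \<longrightarrow> p dvd r \<longrightarrow> \<not> p ^ b dvd s"
  define k where "k = gcd_b b r s"
  have "k \<in> {k. k \<ge> 1 \<and> k dvd r \<and> k ^ b dvd s}"
    unfolding k_def gcd_b_def using finite_gcd_b_candidates[OF assms, of b s]
    by (intro Max_in) auto
  then have k: "k dvd r" "k ^ b dvd s" by auto
  show "gcd_b b r s = 1"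
  proof (rule ccontr)
    assume "gcd_b b r s \<noteq> 1"
    then obtain p where "prime p" "p dvd k" using prime_factor_nat k_def by blast
    with k no_prime show False by (meson dvd_power_same dvd_trans)
  qed
qed

lemma b_visible_iff:
  "b_visible b (r, s) \<longleftrightarrow> r \<ge> 1 \<and> s \<ge> 1 \<and> (\<forall>p. prime p \<longrightarrow> p dvd r \<longrightarrow> \<not> p ^ b dvd s)"
  unfolding b_visible_def inL_def using gcd_b_eq_1_iff by auto

lemma b_invisible_iff:
  "b_invisible b (r, s) \<longleftrightarrow> r \<ge> 1 \<and> s \<ge> 1 \<and> (\<exists>p. prime p \<and> p dvd r \<and> p ^ b dvd s)"
  unfolding b_invisible_def inL_def using gcd_b_eq_1_iff by auto

lemma chinese_remainder_dvd_add_nat: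
  fixes m a :: "'i \<Rightarrow> nat"
  assumes "finite I"
    and pos: "\<forall>i\<in>I. m i > 0"
    and "\<forall>i\<in>I. \<forall>j\<in>I. i \<noteq> j \<longrightarrow> coprime (m i) (m j)"
  shows "\<exists>x>0. \<forall>i\<in>I. m i dvd x + a i"
proof -
  \<comment> \<open>\<open>m i - a i mod m i\<close> stands for the residue \<open>-a i\<close>; adding the product of the moduli makes the solution positive\<close>
  obtain x where x: "\<forall>i\<in>I. [x = m i - a i mod m i] (mod m i)"
    using chinese_remainder_nat[OF assms(1,3), of "\<lambda>i. m i - a i mod m i"] by blast
  define y where "y = x + (\<Prod>i\<in>I. m i)"
  have "m i dvd y + a i" if "i \<in> I" for i
  proof -
    have "[(\<Prod>i\<in>I. m i) = 0] (mod m i)"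
      using that \<open>finite I\<close> by (simp add: cong_0_iff dvd_prod_eqI)
    then have "[y = m i - a i mod m i] (mod m i)"
      using cong_add[OF x[rule_format, OF that]] unfolding y_def by fastforce
    then have "[y + a i = m i - a i mod m i + a i mod m i] (mod m i)"
      using cong_add[OF _ cong_refl, of y _ _ "a i"] by (simp add: cong_def mod_add_right_eq)
    also have "m i - a i mod m i + a i mod m i = m i"
      using pos that by (simp add: order_less_imp_le)
    finally show ?thesis by (simp add: cong_def dvd_eq_mod_eq_0)
  qed
  moreover have "y > 0"
    using pos \<open>finite I\<close> by (simp add: y_def prod_pos)
  ultimately show ?thesis by blast
qed

lemma eq_of_dvd_add_less:
  fixes d x a a' :: nat
  assumes "d dvd x + a" "d dvd x + a'" "a < d" "a' < d"
  shows "a = a'"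
proof -
  have "[x + a = x + a'] (mod d)"
    using assms(1,2) by (simp add: cong_def dvd_eq_mod_eq_0)
  then show ?thesis
    using assms(3,4) by (simp add: cong_add_lcancel_nat cong_less_modulus_unique_nat)
qed

lemma pair_eq_of_dvd_add_less:
  fixes p u v r s r' s' :: nat
  assumes "p dvd u + r" "p dvd u + r'" "p ^ b dvd v + s" "p ^ b dvd v + s'"
    and "r < p" "r' < p" "s < p ^ b" "s' < p ^ b"
  shows "(r, s) = (r', s')"
  using eq_of_dvd_add_less[OF assms(1,2,5,6)] eq_of_dvd_add_less[OF assms(3,4,7,8)] by simp

lemma b_patternD:
  assumes "b_pattern b w C X"
  shows "finite X" "C \<inter> X = {}"
    and "\<And>r s. (r, s) \<in> C \<union> X \<Longrightarrow> 1 \<le> r \<and> r \<le> w \<and> 1 \<le> s \<and> s \<le> w ^ b"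
proof -
  show window: "\<And>r s. (r, s) \<in> C \<union> X \<Longrightarrow> 1 \<le> r \<and> r \<le> w \<and> 1 \<le> s \<and> s \<le> w ^ b"
    using assms unfolding b_pattern_def by blast
  show "finite X"
    by (rule finite_subset[of _ "{1..w} \<times> {1..w ^ b}"]) (use window in fastforce, simp)
  show "C \<inter> X = {}"
    using assms unfolding b_pattern_def by blast
qed

lemma exists_inj_large_primes:
  "\<exists>p :: 'a :: countable \<Rightarrow> nat. inj p \<and> (\<forall>i. prime (p i) \<and> n < p i)"
proof -
  have "{p. prime p} \<subseteq> {p. prime p \<and> n < p} \<union> {..n}" by (auto simp: not_less)
  then have "infinite {p. prime p \<and> n < p}"
    using primes_infinite finite_subset by blast
  then obtain f :: "nat \<Rightarrow> nat" where "inj f" "range f \<subseteq> {p. prime p \<and> n < p}"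
    using infinite_countable_subset by blast
  moreover have "inj (f \<circ> to_nat)"
    using \<open>inj f\<close> by (simp add: inj_compose)
  ultimately show ?thesis by (intro exI[of _ "f \<circ> to_nat"]) auto
qed

lemma exists_pattern_offsets:
  fixes p :: "nat \<times> nat \<Rightarrow> nat"
  assumes "finite crosses" "(r0, s0) \<notin> crosses" "s0 \<ge> 1" "inj p" "\<And>i. prime (p i)"
  shows "\<exists>u>0. \<exists>v>0. (\<forall>(r, s)\<in>crosses. p (r, s) dvd u + r \<and> p (r, s) ^ b dvd v + s) \<and>
           (\<forall>q. prime q \<longrightarrow> q dvd u + r0 \<longrightarrow> q \<notin> p ` crosses \<longrightarrow> [v + s0 = 1] (mod q))"
proof -
  define c where "c = (r0, s0)"
  have p_coprime: "coprime (p i ^ k) (p j ^ k)" if "i \<noteq> j" for i j k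
    using assms(4,5) that by (simp add: primes_coprime inj_eq)
  obtain u where "u > 0" and u: "\<forall>i\<in>crosses. p i dvd u + fst i"
    using chinese_remainder_dvd_add_nat[OF \<open>finite crosses\<close>, of p fst] p_coprime[of _ _ 1] assms(5)
    by (auto simp: prime_gt_0_nat)
  define Q where "Q = {q. prime q \<and> q dvd u + r0 \<and> q \<notin> p ` crosses}"
  have "finite Q"
    unfolding Q_def by (rule finite_subset[of _ "{..u + r0}"]) (use \<open>u > 0\<close> in \<open>auto intro: dvd_imp_le\<close>)
  define m where "m i = (if i = c then \<Prod>Q else p i ^ b)" for i
  define a where "a i = (if i = c then s0 - 1 else snd i)" for i
  have m_coprime: "\<forall>i\<in>insert c crosses. \<forall>j\<in>insert c crosses. i \<noteq> j \<longrightarrow> coprime (m i) (m j)"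
  proof -
    have "coprime (\<Prod>Q) (p j ^ b)" if "j \<in> crosses" for j
      using that assms(5)[of j] by (auto simp: Q_def intro!: prod_coprime_left primes_coprime)
    then show ?thesis
      using assms(2) p_coprime by (auto simp: c_def m_def coprime_commute)
  qed
  have m_pos: "\<forall>i\<in>insert c crosses. m i > 0"
    using assms(5) \<open>finite Q\<close> by (auto simp: m_def Q_def prime_gt_0_nat intro!: prod_pos)
  obtain v where "v > 0" and v: "\<forall>i\<in>insert c crosses. m i dvd v + a i"
    using chinese_remainder_dvd_add_nat[OF _ m_pos m_coprime] \<open>finite crosses\<close> by blast
  have "p i ^ b dvd v + snd i" if "i \<in> crosses" for i
    using v[rule_format, of i] that assms(2) by (auto simp: c_def m_def a_def split: if_splits)
  moreover have "[v + s0 = 1] (mod q)" if "q \<in> Q" for q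
  proof -
    have "\<Prod>Q dvd v + (s0 - 1)"
      using v[rule_format, of c] by (simp add: m_def a_def)
    moreover have "q dvd \<Prod>Q"
      using \<open>finite Q\<close> that by (simp add: dvd_prod_eqI)
    ultimately have "q dvd v + (s0 - 1)"
      by (rule dvd_trans[rotated])
    then have "[v + (s0 - 1) + 1 = 0 + 1] (mod q)"
      by (intro cong_add) (simp_all add: cong_0_iff)
    then show ?thesis
      using assms(3) by simp
  qed
  ultimately show ?thesis
    using u by (intro exI[of _ u] exI[of _ v] conjI \<open>u > 0\<close> \<open>v > 0\<close>) (auto simp: Q_def)
qed

lemma realizable_single_circle:
  assumes "b \<ge> 1" and "b_pattern b w {(r0, s0)} crosses"
  shows "realizable b {(r0, s0)} crosses"
proof -
  note window = b_patternD(3)[OF assms(2)]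
  have "finite crosses" "(r0, s0) \<notin> crosses"
    using b_patternD(1,2)[OF assms(2)] by auto
  have r0s0: "1 \<le> r0" "r0 \<le> w" "1 \<le> s0" "s0 \<le> w ^ b"
    using window[of r0 s0] by auto
  obtain p :: "nat \<times> nat \<Rightarrow> nat" where "inj p" and p: "\<And>i. prime (p i)" "\<And>i. w < p i"
    using exists_inj_large_primes by blast
  have p_pow: "w ^ b < p i ^ b" for i
    using p(2) assms(1) by (simp add: power_strict_mono)
  from exists_pattern_offsets[OF \<open>finite crosses\<close> \<open>(r0, s0) \<notin> crosses\<close> r0s0(3) \<open>inj p\<close> p(1), of b]
  obtain u v where "u > 0" "v > 0"
    and crosses_uv: "\<forall>(r, s)\<in>crosses. p (r, s) dvd u + r \<and> p (r, s) ^ b dvd v + s"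
    and circle: "\<forall>q. prime q \<longrightarrow> q dvd u + r0 \<longrightarrow> q \<notin> p ` crosses \<longrightarrow> [v + s0 = 1] (mod q)"
    by blast
  have cross: "p (r, s) dvd u + r" "p (r, s) ^ b dvd v + s" if "(r, s) \<in> crosses" for r s
    using crosses_uv that by auto
  have circle_visible: "\<not> q ^ b dvd v + s0" if "prime q" "q dvd u + r0" for q
  proof
    assume q_pow: "q ^ b dvd v + s0"
    show False
    proof (cases "q \<in> p ` crosses")
      case True
      then obtain r s where rs: "(r, s) \<in> crosses" "q = p (r, s)" by auto
      have "(r, s) = (r0, s0)"
        using pair_eq_of_dvd_add_less[of q u r r0 b v s s0] cross[OF rs(1)] rs that(2) q_pow
          window[of r s] r0s0 p(2)[of "(r, s)"] p_pow[of "(r, s)"] by auto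
      with rs(1) \<open>(r0, s0) \<notin> crosses\<close> show False by simp
    next
      case False
      have "q dvd v + s0"
        using dvd_trans[OF dvd_power[of b q] q_pow] assms(1) by simp
      with circle that False have "q dvd 1"
        using cong_dvd_iff by blast
      with \<open>prime q\<close> show False by simp
    qed
  qed
  show ?thesis
    unfolding realizable_def
  proof (intro exI conjI ballI)
    show "inL (u, v)"
      using \<open>u > 0\<close> \<open>v > 0\<close> by (simp add: inL_def)
    show "case i of (r, s) \<Rightarrow> b_visible b (u + r, v + s)" if "i \<in> {(r0, s0)}" for i
      using that circle_visible \<open>u > 0\<close> \<open>v > 0\<close> by (simp add: b_visible_iff)
    show "case i of (r, s) \<Rightarrow> b_invisible b (u + r, v + s)" if "i \<in> crosses" for i
    proof (cases i)
      case (Pair r s)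
      then show ?thesis
        using that cross[of r s] p(1)[of i] \<open>u > 0\<close> \<open>v > 0\<close>
        by (auto simp: b_invisible_iff intro!: exI[of _ "p (r, s)"])
    qed
  qed
qed

lemma edist_eq_1_imp_neighbour:
  assumes "edist (x, y) q = 1"
  shows "q \<in> {(x + 1, y), (x - 1, y), (x, y + 1), (x, y - 1)}"
proof -
  obtain x' y' where q: "q = (x', y')" by fastforce
  define d1 where "d1 = int x - int x'"
  define d2 where "d2 = int y - int y'"
  have "real_of_int (d1\<^sup>2 + d2\<^sup>2) = 1"
    using assms by (simp add: edist_def q d1_def d2_def)
  then have sum_sq: "d1\<^sup>2 + d2\<^sup>2 = 1"
    by linarith
  then have "d1\<^sup>2 \<le> 1" "d2\<^sup>2 \<le> 1"
    using zero_le_power2[of d1] zero_le_power2[of d2] by linarith+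
  then have "\<bar>d1\<bar> \<le> 1" "\<bar>d2\<bar> \<le> 1"
    using abs_le_square_iff[of d1 1] abs_le_square_iff[of d2 1] by simp_all
  then have "d1 \<in> {-1, 0, 1}" "d2 \<in> {-1, 0, 1}"
    by auto
  with sum_sq show ?thesis
    unfolding q d1_def d2_def by auto
qed

lemma b_invisible_imp_not_visible: "b_invisible b p \<Longrightarrow> \<not> b_visible b p"
  by (simp add: b_visible_def b_invisible_def)

lemma b_visible_1_1: "b_visible b (1, 1)"
  by (auto simp: b_visible_iff)

lemma not_G_adj_if_neighbours_invisible:
  assumes "b_invisible b (x + 1, y)" "b_invisible b (x - 1, y)"
    and "b_invisible b (x, y + 1)" "b_invisible b (x, y - 1)"
  shows "\<not> G_adj b (x, y) q"
  using assms edist_eq_1_imp_neighbour[of x y q] b_invisible_imp_not_visible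
  by (auto simp: G_adj_def)

lemma not_G_connected_if_isolated:
  assumes "b_visible b p" "b_visible b q" "p \<noteq> q" "\<And>q'. \<not> G_adj b p q'"
  shows "\<not> G_connected b"
proof
  assume "G_connected b"
  then have "(G_adj b)\<^sup>*\<^sup>* p q"
    using assms(1,2) unfolding G_connected_def by blast
  then show False
    using assms(3,4) by (cases rule: converse_rtranclpE) auto
qed

theorem mainTheorem8:
  fixes b :: nat
  assumes "b \<ge> 1"
  shows "(\<forall>w c crosses. b_pattern b w {c} crosses \<longrightarrow> realizable b {c} crosses)
         \<and> \<not> G_connected b"
proof
  show realizable: "\<forall>w c crosses. b_pattern b w {c} crosses \<longrightarrow> realizable b {c} crosses"
    using realizable_single_circle[OF assms] by (metis surj_pair)
  have "(3::nat) \<le> 3 ^ b"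
    using assms by (simp add: self_le_power)
  then have "b_pattern b 3 {(2, 2)} {(3, 2), (1, 2), (2, 3), (2, 1)}"
    by (simp add: b_pattern_def)
  with realizable obtain u v where "b_visible b (u + 2, v + 2)"
    and "b_invisible b (u + 3, v + 2)" "b_invisible b (u + 1, v + 2)"
    and "b_invisible b (u + 2, v + 3)" "b_invisible b (u + 2, v + 1)"
    unfolding realizable_def by fastforce
  moreover have "\<not> G_adj b (u + 2, v + 2) q" for q
    using calculation by (intro not_G_adj_if_neighbours_invisible) (simp_all add: numeral_3_eq_3)
  moreover have "(u + 2, v + 2) \<noteq> (1, 1)"
    by simp
  ultimately show "\<not> G_connected b"
    using not_G_connected_if_isolated[OF _ b_visible_1_1] by blast
qed

end
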